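(* Let $A$ be a semiprime $2$-torsion free associative algebra and let $Q$ be a subalgebra of $Q_s(A)$ containing $A$. Then $A^{(-)}/Z(A)$ and $Q^{(-)}/Z(Q)$ are semiprime Lie algebras, the natural map $A^{(-)}/Z(A)\to Q^{(-)}/Z(Q)$ is injective, and (identifying $A^{(-)}/Z(A)$ with its image) $Q^{(-)}/Z(Q)$ is a Lie algebra of quotients of $A^{(-)}/Z(A)$.
   Context: Algebras are over a commutative unital ring $\Phi$; associative algebras need not be unital. For an associative algebra $A$, $A^{(-)}$ is the Lie algebra with the same module and bracket $[x,y]=xy-yx$; $Z(A)$ is the center. $A$ is $2$-torsion free if $2x=0$ implies $x=0$. For semiprime $A$, $Q^l_{\max}(A)$ denotes the maximal left (Utumi) quotient algebra and $Q_s(A)$ the Martindale symmetric algebra of quotients, which consists of those $q\in Q^l_{\max}(A)$ for which there is an essential ideal $I$ of $A$ with $Iq+qI\subseteq A$. A Lie algebra $L$ is semiprime if $[I,I]\neq 0$ for each nonzero ideal $I$. For a Lie subalgebra $L\subseteq Q$, $Q$ is an algebra of quotients of $L$ if for every nonzero $q\in Q$ there is an ideal $I$ of $L$ with $\mathrm{Ann}_L(I)=0$ (where $\mathrm{Ann}_L(I)=\{a\in L:[a,I]=0\}$) and $0\ne[I,q]\subseteq L$. *)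

theory Defs
  imports Main
begin

text \<open>The ambient type 'a carries a (not necessarily unital) ring structure; the
scalar action of the commutative unital ring 'r (playing the role of Phi) is smult.\<close>

definition is_algebra :: "('r::comm_ring_1 \<Rightarrow> 'a::ring \<Rightarrow> 'a) \<Rightarrow> bool" where
  "is_algebra smult \<longleftrightarrow>
     (\<forall>r x y. smult r (x + y) = smult r x + smult r y) \<and>
     (\<forall>r s x. smult (r + s) x = smult r x + smult s x) \<and>
     (\<forall>r s x. smult (r * s) x = smult r (smult s x)) \<and>
     (\<forall>x. smult 1 x = x) \<and>
     (\<forall>r x y. smult r (x * y) = smult r x * y) \<and>
     (\<forall>r x y. smult r (x * y) = x * smult r y)"

definition subalgebra :: "('r::comm_ring_1 \<Rightarrow> 'a::ring \<Rightarrow> 'a) \<Rightarrow> 'a set \<Rightarrow> bool" where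
  "subalgebra smult S \<longleftrightarrow> 0 \<in> S \<and>
     (\<forall>x\<in>S. \<forall>y\<in>S. x + y \<in> S \<and> x * y \<in> S) \<and> (\<forall>x\<in>S. - x \<in> S) \<and>
     (\<forall>r. \<forall>x\<in>S. smult r x \<in> S)"

definition alg_ideal :: "('r::comm_ring_1 \<Rightarrow> 'a::ring \<Rightarrow> 'a) \<Rightarrow> 'a set \<Rightarrow> 'a set \<Rightarrow> bool" where
  "alg_ideal smult A I \<longleftrightarrow> I \<subseteq> A \<and> 0 \<in> I \<and>
     (\<forall>x\<in>I. \<forall>y\<in>I. x + y \<in> I) \<and> (\<forall>x\<in>I. - x \<in> I) \<and> (\<forall>r. \<forall>x\<in>I. smult r x \<in> I) \<and>
     (\<forall>a\<in>A. \<forall>x\<in>I. a * x \<in> I \<and> x * a \<in> I)"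

definition left_ideal :: "('r::comm_ring_1 \<Rightarrow> 'a::ring \<Rightarrow> 'a) \<Rightarrow> 'a set \<Rightarrow> 'a set \<Rightarrow> bool" where
  "left_ideal smult A I \<longleftrightarrow> I \<subseteq> A \<and> 0 \<in> I \<and>
     (\<forall>x\<in>I. \<forall>y\<in>I. x + y \<in> I) \<and> (\<forall>x\<in>I. - x \<in> I) \<and> (\<forall>r. \<forall>x\<in>I. smult r x \<in> I) \<and>
     (\<forall>a\<in>A. \<forall>x\<in>I. a * x \<in> I)"

text \<open>A is semiprime: every ideal I with I^2 = 0 is zero (I^2 is spanned by the
products xy, x,y in I).\<close>
definition semiprime_alg :: "('r::comm_ring_1 \<Rightarrow> 'a::ring \<Rightarrow> 'a) \<Rightarrow> 'a set \<Rightarrow> bool" where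
  "semiprime_alg smult A \<longleftrightarrow>
     (\<forall>I. alg_ideal smult A I \<and> (\<forall>x\<in>I. \<forall>y\<in>I. x * y = 0) \<longrightarrow> I = {0})"

definition two_torsion_free :: "'a::ring set \<Rightarrow> bool" where
  "two_torsion_free A \<longleftrightarrow> (\<forall>x\<in>A. x + x = 0 \<longrightarrow> x = 0)"

definition center :: "'a::ring set \<Rightarrow> 'a set" where
  "center A = {z \<in> A. \<forall>x\<in>A. z * x = x * z}"

definition essential_ideal :: "('r::comm_ring_1 \<Rightarrow> 'a::ring \<Rightarrow> 'a) \<Rightarrow> 'a set \<Rightarrow> 'a set \<Rightarrow> bool" where
  "essential_ideal smult A I \<longleftrightarrow> alg_ideal smult A I \<and>
     (\<forall>J. alg_ideal smult A J \<and> J \<noteq> {0} \<longrightarrow> I \<inter> J \<noteq> {0})"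

definition dense_left_ideal :: "('r::comm_ring_1 \<Rightarrow> 'a::ring \<Rightarrow> 'a) \<Rightarrow> 'a set \<Rightarrow> 'a set \<Rightarrow> bool" where
  "dense_left_ideal smult A I \<longleftrightarrow> left_ideal smult A I \<and>
     (\<forall>p\<in>A. \<forall>q\<in>A. p \<noteq> 0 \<longrightarrow> (\<exists>a\<in>A. a * p \<noteq> 0 \<and> a * q \<in> I))"

definition left_module_hom :: "('r::comm_ring_1 \<Rightarrow> 'a::ring \<Rightarrow> 'a) \<Rightarrow> 'a set \<Rightarrow> 'a set \<Rightarrow> ('a \<Rightarrow> 'a) \<Rightarrow> bool" where
  "left_module_hom smult A I f \<longleftrightarrow> (\<forall>x\<in>I. f x \<in> A) \<and>
     (\<forall>x\<in>I. \<forall>y\<in>I. f (x + y) = f x + f y) \<and>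
     (\<forall>r. \<forall>x\<in>I. f (smult r x) = smult r (f x)) \<and>
     (\<forall>a\<in>A. \<forall>x\<in>I. f (a * x) = a * f x)"

text \<open>U is (a copy of) the maximal left quotient algebra Q^l_max(A), via Utumi's
characterization.\<close>
definition is_Qmax_left :: "('r::comm_ring_1 \<Rightarrow> 'a::ring \<Rightarrow> 'a) \<Rightarrow> 'a set \<Rightarrow> 'a set \<Rightarrow> bool" where
  "is_Qmax_left smult A U \<longleftrightarrow> subalgebra smult U \<and> subalgebra smult A \<and> A \<subseteq> U \<and>
     (\<forall>q\<in>U. \<exists>I. dense_left_ideal smult A I \<and> (\<forall>x\<in>I. x * q \<in> A)) \<and>
     (\<forall>q\<in>U. \<forall>I. dense_left_ideal smult A I \<and> (\<forall>x\<in>I. x * q = 0) \<longrightarrow> q = 0) \<and>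
     (\<forall>I f. dense_left_ideal smult A I \<and> left_module_hom smult A I f \<longrightarrow>
        (\<exists>q\<in>U. \<forall>x\<in>I. f x = x * q))"

definition Qs :: "('r::comm_ring_1 \<Rightarrow> 'a::ring \<Rightarrow> 'a) \<Rightarrow> 'a set \<Rightarrow> 'a set \<Rightarrow> 'a set" where
  "Qs smult A U = {q \<in> U. \<exists>I. essential_ideal smult A I \<and> (\<forall>x\<in>I. x * q \<in> A \<and> q * x \<in> A)}"

record ('r, 'b) lie_alg =
  lcar :: "'b set"
  lzero :: 'b
  ladd :: "'b \<Rightarrow> 'b \<Rightarrow> 'b"
  lsmult :: "'r \<Rightarrow> 'b \<Rightarrow> 'b"
  lbr :: "'b \<Rightarrow> 'b \<Rightarrow> 'b"

definition lie_algebra :: "('r::comm_ring_1, 'b) lie_alg \<Rightarrow> bool" where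
  "lie_algebra L \<longleftrightarrow> (let C = lcar L; z = lzero L; p = ladd L; s = lsmult L; b = lbr L in
     z \<in> C \<and> (\<forall>x\<in>C. \<forall>y\<in>C. p x y \<in> C \<and> b x y \<in> C) \<and> (\<forall>r. \<forall>x\<in>C. s r x \<in> C) \<and>
     (\<forall>x\<in>C. \<forall>y\<in>C. \<forall>w\<in>C. p (p x y) w = p x (p y w)) \<and>
     (\<forall>x\<in>C. \<forall>y\<in>C. p x y = p y x) \<and>
     (\<forall>x\<in>C. p x z = x) \<and> (\<forall>x\<in>C. \<exists>y\<in>C. p x y = z) \<and>
     (\<forall>r. \<forall>x\<in>C. \<forall>y\<in>C. s r (p x y) = p (s r x) (s r y)) \<and>
     (\<forall>r t. \<forall>x\<in>C. s (r + t) x = p (s r x) (s t x)) \<and>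
     (\<forall>r t. \<forall>x\<in>C. s (r * t) x = s r (s t x)) \<and>
     (\<forall>x\<in>C. s 1 x = x) \<and>
     (\<forall>x\<in>C. \<forall>y\<in>C. \<forall>w\<in>C. b (p x y) w = p (b x w) (b y w) \<and> b w (p x y) = p (b w x) (b w y)) \<and>
     (\<forall>r. \<forall>x\<in>C. \<forall>y\<in>C. b (s r x) y = s r (b x y) \<and> b x (s r y) = s r (b x y)) \<and>
     (\<forall>x\<in>C. b x x = z) \<and>
     (\<forall>x\<in>C. \<forall>y\<in>C. \<forall>w\<in>C. p (p (b x (b y w)) (b y (b w x))) (b w (b x y)) = z))"

definition lie_ideal :: "('r::comm_ring_1, 'b) lie_alg \<Rightarrow> 'b set \<Rightarrow> bool" where
  "lie_ideal L I \<longleftrightarrow> I \<subseteq> lcar L \<and> lzero L \<in> I \<and>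
     (\<forall>x\<in>I. \<forall>y\<in>I. ladd L x y \<in> I) \<and> (\<forall>r. \<forall>x\<in>I. lsmult L r x \<in> I) \<and>
     (\<forall>x\<in>lcar L. \<forall>y\<in>I. lbr L x y \<in> I)"

text \<open>Semiprime: [I, I] \<noteq> 0 for every nonzero ideal I ([I,I] is spanned by the brackets).\<close>
definition lie_semiprime :: "('r::comm_ring_1, 'b) lie_alg \<Rightarrow> bool" where
  "lie_semiprime L \<longleftrightarrow>
     (\<forall>I. lie_ideal L I \<and> I \<noteq> {lzero L} \<longrightarrow> (\<exists>x\<in>I. \<exists>y\<in>I. lbr L x y \<noteq> lzero L))"

definition lie_ann :: "('r, 'b) lie_alg \<Rightarrow> 'b set \<Rightarrow> 'b set" where
  "lie_ann L I = {a \<in> lcar L. \<forall>x\<in>I. lbr L a x = lzero L}"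

text \<open>Q is an algebra of quotients of L, where L is identified with its image under
the embedding phi.\<close>
definition lie_algebra_of_quotients ::
  "('r::comm_ring_1, 'b) lie_alg \<Rightarrow> ('r, 'c) lie_alg \<Rightarrow> ('b \<Rightarrow> 'c) \<Rightarrow> bool" where
  "lie_algebra_of_quotients L Q phi \<longleftrightarrow>
     (\<forall>q\<in>lcar Q. q \<noteq> lzero Q \<longrightarrow>
        (\<exists>I. lie_ideal L I \<and> lie_ann L I = {lzero L} \<and>
             (\<forall>x\<in>I. lbr Q (phi x) q \<in> phi ` lcar L) \<and>
             (\<exists>x\<in>I. lbr Q (phi x) q \<noteq> lzero Q)))"

definition minus_lie :: "('r::comm_ring_1 \<Rightarrow> 'a::ring \<Rightarrow> 'a) \<Rightarrow> 'a set \<Rightarrow> ('r, 'a) lie_alg" where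
  "minus_lie smult A = \<lparr>lcar = A, lzero = 0, ladd = (+), lsmult = smult,
                        lbr = (\<lambda>x y. x * y - y * x)\<rparr>"

definition lcoset :: "('r, 'b) lie_alg \<Rightarrow> 'b set \<Rightarrow> 'b \<Rightarrow> 'b set" where
  "lcoset L Z x = (\<lambda>z. ladd L x z) ` Z"

definition rep :: "'b set \<Rightarrow> 'b" where
  "rep X = (SOME x. x \<in> X)"

definition lie_quot :: "('r, 'b) lie_alg \<Rightarrow> 'b set \<Rightarrow> ('r, 'b set) lie_alg" where
  "lie_quot L Z = \<lparr>lcar = lcoset L Z ` lcar L, lzero = lcoset L Z (lzero L),
     ladd = (\<lambda>X Y. lcoset L Z (ladd L (rep X) (rep Y))),
     lsmult = (\<lambda>r X. lcoset L Z (lsmult L r (rep X))),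
     lbr = (\<lambda>X Y. lcoset L Z (lbr L (rep X) (rep Y)))\<rparr>"

definition minus_mod_center :: "('r::comm_ring_1 \<Rightarrow> 'a::ring \<Rightarrow> 'a) \<Rightarrow> 'a set \<Rightarrow> ('r, 'a set) lie_alg" where
  "minus_mod_center smult A = lie_quot (minus_lie smult A) (center A)"

definition natural_map :: "('r::comm_ring_1 \<Rightarrow> 'a::ring \<Rightarrow> 'a) \<Rightarrow> 'a set \<Rightarrow> 'a set \<Rightarrow> 'a set" where
  "natural_map smult Q X = lcoset (minus_lie smult Q) (center Q) (rep X)"

end

theory Submission
  imports Defs "HOL.Modules"
begin

text \<open>For a 2-torsion free algebra \<open>S\<close> with \<open>aSa = 0 \<Longrightarrow> a = 0\<close>, the Lie algebra
  \<open>S\<^sup>(\<^sup>-\<^sup>)/Z(S)\<close> is semiprime by Herstein's argument: a nonzero abelian Lie ideal yields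
  \<open>u \<notin> Z(S)\<close> with \<open>[u,[u,S]] \<subseteq> Z(S)\<close>, and the inner derivation \<open>[u,-]\<close> then forces \<open>u\<close> to be
  central. Every \<open>q \<in> Q \<subseteq> Q\<^sub>s(A)\<close> is moved into \<open>A\<close> by an essential ideal \<open>I\<close> of \<open>A\<close>, and an
  element of \<open>Q\<close> annihilated by \<open>I\<close> on either side vanishes; this transfers 2-torsion freeness
  and semiprimeness from \<open>A\<close> to \<open>Q\<close>, gives \<open>Z(A) = Z(Q) \<inter> A\<close>, and shows that an element of \<open>Q\<close>
  whose commutators with \<open>I\<close> are central is central. Applied to \<open>Q\<close> this makes \<open>[I, q]\<close> nonzero
  modulo \<open>Z(Q)\<close> for \<open>q \<notin> Z(Q)\<close>; applied to \<open>A\<close> itself (an algebra between \<open>A\<close> and \<open>Q\<^sub>s(A)\<close>)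
  it shows that the Lie ideal \<open>(I + Z(A))/Z(A)\<close> has zero annihilator.\<close>

locale algebra_over = module smult
  for smult :: "'r::comm_ring_1 \<Rightarrow> 'a::ring \<Rightarrow> 'a" +
  assumes scale_mult_left: "smult r (x * y) = smult r x * y"
    and scale_mult_right: "smult r (x * y) = x * smult r y"

lemma is_algebra_imp_algebra_over:
  assumes "is_algebra smult"
  shows "algebra_over smult"
proof unfold_locales
  fix r s x y
  note ax = assms[unfolded is_algebra_def]
  show "smult r (x + y) = smult r x + smult r y" "smult (r + s) x = smult r x + smult s x"
    "smult r (smult s x) = smult (r * s) x" "smult 1 x = x"
    "smult r (x * y) = smult r x * y" "smult r (x * y) = x * smult r y"
    using ax by metis+
qed

lemma alg_idealI:
  assumes "I \<subseteq> A" "0 \<in> I" "\<And>x y. x \<in> I \<Longrightarrow> y \<in> I \<Longrightarrow> x + y \<in> I"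
    "\<And>x. x \<in> I \<Longrightarrow> - x \<in> I" "\<And>r x. x \<in> I \<Longrightarrow> smult r x \<in> I"
    "\<And>a x. a \<in> A \<Longrightarrow> x \<in> I \<Longrightarrow> a * x \<in> I" "\<And>a x. a \<in> A \<Longrightarrow> x \<in> I \<Longrightarrow> x * a \<in> I"
  shows "alg_ideal smult A I"
  unfolding alg_ideal_def by (intro conjI ballI allI assms)

lemma alg_idealD:
  assumes "alg_ideal smult A I"
  shows "I \<subseteq> A" "0 \<in> I" "\<And>x y. x \<in> I \<Longrightarrow> y \<in> I \<Longrightarrow> x + y \<in> I"
    "\<And>x. x \<in> I \<Longrightarrow> - x \<in> I" "\<And>r x. x \<in> I \<Longrightarrow> smult r x \<in> I"
    "\<And>a x. a \<in> A \<Longrightarrow> x \<in> I \<Longrightarrow> a * x \<in> I" "\<And>a x. a \<in> A \<Longrightarrow> x \<in> I \<Longrightarrow> x * a \<in> I"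
  using assms unfolding alg_ideal_def by auto

lemma alg_ideal_diff: "alg_ideal smult A I \<Longrightarrow> x \<in> I \<Longrightarrow> y \<in> I \<Longrightarrow> x - y \<in> I"
  using alg_idealD(3)[of smult A I x "- y"] alg_idealD(4)[of smult A I y] by simp

lemma essential_idealD: "essential_ideal smult A I \<Longrightarrow> alg_ideal smult A I"
  unfolding essential_ideal_def by blast

definition left_ann :: "'a::ring set \<Rightarrow> 'a set \<Rightarrow> 'a set" where
  "left_ann S I = {y \<in> S. \<forall>x\<in>I. y * x = 0}"

definition right_ann :: "'a::ring set \<Rightarrow> 'a set \<Rightarrow> 'a set" where
  "right_ann S I = {y \<in> S. \<forall>x\<in>I. x * y = 0}"

definition semiprime_elementwise :: "'a::ring set \<Rightarrow> bool" where
  "semiprime_elementwise S \<longleftrightarrow> (\<forall>a\<in>S. (\<forall>s\<in>S. a * s * a = 0) \<longrightarrow> a = 0)"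

section \<open>Subalgebras, their centres and ideals\<close>

locale subalg = algebra_over smult for smult :: "'r::comm_ring_1 \<Rightarrow> 'a::ring \<Rightarrow> 'a" +
  fixes S :: "'a set"
  assumes subalgebra: "subalgebra smult S"
begin

lemma S_zero: "0 \<in> S" and S_add: "x \<in> S \<Longrightarrow> y \<in> S \<Longrightarrow> x + y \<in> S"
  and S_mult: "x \<in> S \<Longrightarrow> y \<in> S \<Longrightarrow> x * y \<in> S"
  and S_uminus: "x \<in> S \<Longrightarrow> - x \<in> S" and S_scale: "x \<in> S \<Longrightarrow> smult r x \<in> S"
  using subalgebra unfolding subalgebra_def by blast+

lemma S_diff: "x \<in> S \<Longrightarrow> y \<in> S \<Longrightarrow> x - y \<in> S"
  using S_add[of x "- y"] S_uminus[of y] by simp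

lemmas S_closed = S_zero S_add S_mult S_uminus S_scale S_diff

lemma center_subset: "z \<in> center S \<Longrightarrow> z \<in> S"
  and center_commute: "z \<in> center S \<Longrightarrow> x \<in> S \<Longrightarrow> z * x = x * z"
  unfolding center_def by blast+

lemma center_zero: "0 \<in> center S"
  unfolding center_def using S_zero by simp

lemma center_add: "a \<in> center S \<Longrightarrow> b \<in> center S \<Longrightarrow> a + b \<in> center S"
  unfolding center_def by (simp add: S_add distrib_left distrib_right)

lemma center_uminus: "a \<in> center S \<Longrightarrow> - a \<in> center S"
  unfolding center_def by (simp add: S_uminus)

lemma center_diff: "a \<in> center S \<Longrightarrow> b \<in> center S \<Longrightarrow> a - b \<in> center S"
  using center_add[of a "- b"] center_uminus[of b] by simp

lemma center_scale: "a \<in> center S \<Longrightarrow> smult r a \<in> center S"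
  unfolding center_def by (simp add: S_scale flip: scale_mult_left scale_mult_right)

lemma center_translate: "c \<in> center S \<Longrightarrow> (\<lambda>z. c + z) ` center S = center S"
  using center_add center_diff[of _ c] by (force simp: image_iff)

lemma ideal_self: "alg_ideal smult S S"
  by (rule alg_idealI) (auto simp: S_closed)

lemma ideal_Int:
  assumes "alg_ideal smult S I" "alg_ideal smult S J"
  shows "alg_ideal smult S (I \<inter> J)"
  using alg_idealD[OF assms(1)] alg_idealD[OF assms(2)] by (intro alg_idealI) auto

lemma ideal_left_ann:
  assumes "\<And>s t. s \<in> S \<Longrightarrow> t \<in> T \<Longrightarrow> s * t \<in> T"
  shows "alg_ideal smult S (left_ann S T)"
  using assms unfolding left_ann_def
  by (intro alg_idealI)
    (auto simp: S_closed distrib_right mult.assoc simp flip: scale_mult_left)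

lemma ideal_right_ann:
  assumes "\<And>t s. t \<in> T \<Longrightarrow> s \<in> S \<Longrightarrow> t * s \<in> T"
  shows "alg_ideal smult S (right_ann S T)"
  using assms unfolding right_ann_def
  by (intro alg_idealI)
    (auto simp: S_closed distrib_left mult.assoc[symmetric] simp flip: scale_mult_right)

lemma essential_ideal_self: "essential_ideal smult S S"
  unfolding essential_ideal_def using ideal_self alg_idealD(1) by blast

section \<open>The Lie algebra \<open>S\<^sup>(\<^sup>-\<^sup>)/Z(S)\<close>\<close>

abbreviation zcoset :: "'a \<Rightarrow> 'a set" where
  "zcoset \<equiv> lcoset (minus_lie smult S) (center S)"

abbreviation LZ :: "('r, 'a set) lie_alg" where
  "LZ \<equiv> minus_mod_center smult S"

lemma zcoset_eq_image: "zcoset x = (\<lambda>z. x + z) ` center S"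
  by (simp add: lcoset_def minus_lie_def)

lemma zcoset_eq_iff:
  assumes "x \<in> S" "y \<in> S"
  shows "zcoset x = zcoset y \<longleftrightarrow> x - y \<in> center S"
proof
  assume "zcoset x = zcoset y"
  then have "x \<in> (\<lambda>z. y + z) ` center S"
    using center_zero by (force simp: zcoset_eq_image)
  then show "x - y \<in> center S" by auto
next
  assume "x - y \<in> center S"
  then have "zcoset x = (\<lambda>z. y + z) ` ((\<lambda>z. (x - y) + z) ` center S)"
    by (simp add: zcoset_eq_image image_image add.assoc[symmetric])
  also have "\<dots> = zcoset y"
    using center_translate[OF \<open>x - y \<in> center S\<close>] by (simp add: zcoset_eq_image)
  finally show "zcoset x = zcoset y" .
qed

lemma zcoset_eq_zero_iff: "x \<in> S \<Longrightarrow> zcoset x = zcoset 0 \<longleftrightarrow> x \<in> center S"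
  using zcoset_eq_iff[of x 0] S_zero by simp

lemma zcoset_add_center: "x \<in> S \<Longrightarrow> z \<in> center S \<Longrightarrow> zcoset (x + z) = zcoset x"
  using zcoset_eq_iff[of "x + z" x] S_add center_subset by simp

lemma rep_zcoset:
  obtains z where "z \<in> center S" "rep (zcoset x) = x + z"
proof -
  have "x \<in> zcoset x"
    using center_zero by (force simp: zcoset_eq_image)
  then have "rep (zcoset x) \<in> zcoset x"
    unfolding rep_def by (rule someI)
  then show ?thesis
    using that by (auto simp: zcoset_eq_image)
qed

lemma LZ_simps:
  "lcar LZ = zcoset ` S" "lzero LZ = zcoset 0"
  "ladd LZ X Y = zcoset (rep X + rep Y)" "lsmult LZ r X = zcoset (smult r (rep X))"
  "lbr LZ X Y = zcoset (rep X * rep Y - rep Y * rep X)"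
  by (simp_all add: minus_mod_center_def lie_quot_def minus_lie_def)

lemma LZ_add:
  assumes "x \<in> S" "y \<in> S"
  shows "ladd LZ (zcoset x) (zcoset y) = zcoset (x + y)"
proof -
  obtain z w where "z \<in> center S" "rep (zcoset x) = x + z" "w \<in> center S" "rep (zcoset y) = y + w"
    using rep_zcoset by metis
  then show ?thesis
    using zcoset_add_center[of "x + y" "z + w"] assms
    by (simp add: LZ_simps S_add center_add algebra_simps)
qed

lemma LZ_scale:
  assumes "x \<in> S"
  shows "lsmult LZ r (zcoset x) = zcoset (smult r x)"
proof -
  obtain z where "z \<in> center S" "rep (zcoset x) = x + z"
    using rep_zcoset by metis
  then show ?thesis
    using zcoset_add_center[of "smult r x" "smult r z"] assms
    by (simp add: LZ_simps S_scale center_scale scale_right_distrib)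
qed

lemma LZ_bracket:
  assumes "x \<in> S" "y \<in> S"
  shows "lbr LZ (zcoset x) (zcoset y) = zcoset (x * y - y * x)"
proof -
  obtain z w where z: "z \<in> center S" "rep (zcoset x) = x + z"
    and w: "w \<in> center S" "rep (zcoset y) = y + w"
    using rep_zcoset by metis
  have "z * y = y * z" "w * x = x * w" "z * w = w * z"
    using center_commute z(1) w(1) assms center_subset by metis+
  then have "(x + z) * (y + w) - (y + w) * (x + z) = x * y - y * x"
    by (simp add: algebra_simps)
  then show ?thesis
    by (simp add: LZ_simps z(2) w(2))
qed

lemma LZ_lie_algebra: "lie_algebra LZ"
proof -
  have "\<exists>y\<in>S. zcoset (x + y) = zcoset 0" if "x \<in> S" for x
    using that S_uminus by (intro bexI[of _ "- x"]) simp_all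
  then show ?thesis
    unfolding lie_algebra_def Let_def LZ_simps(1,2)
    by (simp add: LZ_add LZ_scale LZ_bracket S_closed scale_right_distrib scale_left_distrib
        scale_right_diff_distrib algebra_simps flip: scale_mult_left scale_mult_right)
qed

lemma lie_ideal_zcoset_image:
  assumes "alg_ideal smult S I"
  shows "lie_ideal LZ (zcoset ` I)"
proof -
  note I = alg_idealD[OF assms]
  have "x * y - y * x \<in> I" if "x \<in> S" "y \<in> I" for x y
    using alg_ideal_diff[OF assms] I(6,7) that by blast
  then show ?thesis
    using I(1-5) unfolding lie_ideal_def LZ_simps(1,2)
    by (auto simp: subset_iff LZ_add LZ_scale LZ_bracket)
qed

end

section \<open>Semiprime algebras\<close>

locale semiprime_subalg = subalg +
  assumes S_semiprime: "semiprime_alg smult S"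
begin

lemma ideal_eq_zero_if_square_zero:
  "alg_ideal smult S I \<Longrightarrow> (\<And>x y. x \<in> I \<Longrightarrow> y \<in> I \<Longrightarrow> x * y = 0) \<Longrightarrow> I = {0}"
  using S_semiprime unfolding semiprime_alg_def by blast

lemma ideal_Int_left_ann:
  assumes "alg_ideal smult S I"
  shows "I \<inter> left_ann S I = {0}"
proof (rule ideal_eq_zero_if_square_zero)
  show "alg_ideal smult S (I \<inter> left_ann S I)"
    using assms by (intro ideal_Int ideal_left_ann) (auto dest: alg_idealD(6))
qed (auto simp: left_ann_def)

lemma ideal_Int_right_ann:
  assumes "alg_ideal smult S I"
  shows "I \<inter> right_ann S I = {0}"
proof (rule ideal_eq_zero_if_square_zero)
  show "alg_ideal smult S (I \<inter> right_ann S I)"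
    using assms by (intro ideal_Int ideal_right_ann) (auto dest: alg_idealD(7))
qed (auto simp: right_ann_def)

lemma essential_left_ann:
  assumes "essential_ideal smult S I"
  shows "left_ann S I = {0}"
proof -
  have I: "alg_ideal smult S I"
    using assms by (rule essential_idealD)
  have "alg_ideal smult S (left_ann S I)"
    using I by (intro ideal_left_ann) (auto dest: alg_idealD(6))
  then show ?thesis
    using assms ideal_Int_left_ann[OF I] unfolding essential_ideal_def by blast
qed

lemma essential_right_ann:
  assumes "essential_ideal smult S I"
  shows "right_ann S I = {0}"
proof -
  have I: "alg_ideal smult S I"
    using assms by (rule essential_idealD)
  have "alg_ideal smult S (right_ann S I)"
    using I by (intro ideal_right_ann) (auto dest: alg_idealD(7))
  then show ?thesis
    using assms ideal_Int_right_ann[OF I] unfolding essential_ideal_def by blast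
qed

lemma essential_left_ann_eq_zero:
  "essential_ideal smult S I \<Longrightarrow> y \<in> S \<Longrightarrow> (\<And>x. x \<in> I \<Longrightarrow> y * x = 0) \<Longrightarrow> y = 0"
  using essential_left_ann[of I] unfolding left_ann_def by blast

lemma essential_imp_dense:
  assumes E: "essential_ideal smult S I"
  shows "dense_left_ideal smult S I"
proof -
  note I = alg_idealD[OF essential_idealD[OF E]]
  have "\<exists>a\<in>S. a * p \<noteq> 0 \<and> a * q \<in> I" if "p \<in> S" "q \<in> S" "p \<noteq> 0" for p q
  proof -
    have "p \<notin> right_ann S I"
      using essential_right_ann[OF E] that(3) by blast
    then obtain x where "x \<in> I" "x * p \<noteq> 0"
      using \<open>p \<in> S\<close> unfolding right_ann_def by auto
    then show ?thesis
      using I(1,7) \<open>q \<in> S\<close> by blast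
  qed
  then show ?thesis
    using I unfolding dense_left_ideal_def left_ideal_def by (intro conjI ballI allI) auto
qed

text \<open>If \<open>aSa = 0\<close> then \<open>Sa\<close> lies in the ideal \<open>R\<close> of right annihilators of \<open>a\<close> and \<open>aS\<close>
  as well as in its left annihilator, so \<open>Sa = 0\<close>, and then \<open>a\<close> lies in \<open>S \<inter> right_ann S S = 0\<close>.\<close>
lemma semiprime_elementwise: "semiprime_elementwise S"
  unfolding semiprime_elementwise_def
proof (intro ballI impI)
  fix a assume a: "a \<in> S" and aSa: "\<forall>s\<in>S. a * s * a = 0"
  define R where "R = right_ann S (insert a ((*) a ` S))"
  have R: "alg_ideal smult S R"
    unfolding R_def using a by (intro ideal_right_ann) (auto simp: S_mult mult.assoc)
  have "t * a \<in> R \<inter> left_ann S R" if t: "t \<in> S" for t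
  proof -
    have "a * (t * a) = 0"
      using aSa t by (metis mult.assoc)
    moreover have "a * s * (t * a) = 0" if "s \<in> S" for s
      using aSa that t S_mult by (metis mult.assoc)
    ultimately show ?thesis
      using t a S_mult unfolding R_def right_ann_def left_ann_def by (auto simp: mult.assoc)
  qed
  then have "a \<in> right_ann S S"
    using ideal_Int_left_ann[OF R] a unfolding right_ann_def by blast
  then show "a = 0"
    using ideal_Int_right_ann[OF ideal_self] a by blast
qed

end

locale semiprime_tf_subalg = subalg +
  assumes two_torsion_free_S: "two_torsion_free S"
    and semiprime_elementwise_S: "semiprime_elementwise S"
begin

lemma double_eq_zero: "x \<in> S \<Longrightarrow> x + x = 0 \<Longrightarrow> x = 0"
  using two_torsion_free_S unfolding two_torsion_free_def by blast

lemma sandwich_eq_zero: "a \<in> S \<Longrightarrow> (\<And>s. s \<in> S \<Longrightarrow> a * s * a = 0) \<Longrightarrow> a = 0"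
  using semiprime_elementwise_S unfolding semiprime_elementwise_def by blast

lemma central_square_eq_zero:
  assumes c: "c \<in> center S" and "c * c = 0"
  shows "c = 0"
proof (rule sandwich_eq_zero)
  show "c \<in> S" using c by (rule center_subset)
  fix s assume "s \<in> S"
  then have "c * s * c = c * c * s"
    using center_commute[OF c] by (metis mult.assoc)
  then show "c * s * c = 0" using \<open>c * c = 0\<close> by simp
qed

text \<open>Herstein's argument for the inner derivation \<open>d = [u, -]\<close>: first \<open>d\<^sup>2 = 0\<close>,
  then \<open>2 d(x) d(y) = d\<^sup>2(xy) = 0\<close>, and finally \<open>d(x) s d(x) = d(x) d(sx) - d(x) d(s) x = 0\<close>.\<close>
lemma double_commutator_eq_zero:
  assumes u: "u \<in> S"
    and central: "\<And>x. x \<in> S \<Longrightarrow> u * (u * x - x * u) - (u * x - x * u) * u \<in> center S"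
    and x: "x \<in> S"
  shows "u * (u * x - x * u) - (u * x - x * u) * u = 0"
proof -
  define d where "d y = u * y - y * u" for y
  define z where "z = d (d x)"
  have dS: "d y \<in> S" if "y \<in> S" for y
    unfolding d_def using that u by (simp add: S_closed)
  have z: "z \<in> center S"
    unfolding z_def d_def using central x .
  have "d (d (x * u)) = z * u"
    unfolding z_def d_def by (simp add: algebra_simps)
  then have zu: "z * u \<in> center S"
    using central[of "x * u"] x u S_mult unfolding d_def by simp
  have "z * d y = 0" if y: "y \<in> S" for y
  proof -
    have "z * d y = (z * u) * y - (z * y) * u"
      unfolding d_def by (simp add: algebra_simps)
    also have "\<dots> = y * (z * u) - (y * z) * u"
      using center_commute[OF zu y] center_commute[OF z y] by simp
    finally show ?thesis by (simp add: mult.assoc)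
  qed
  from this[of "d x"] have "z * z = 0"
    using dS x unfolding z_def by simp
  then show ?thesis
    using central_square_eq_zero[OF z] unfolding z_def d_def by simp
qed

lemma center_if_double_commutator_zero:
  assumes u: "u \<in> S"
    and dd: "\<And>x. x \<in> S \<Longrightarrow> u * (u * x - x * u) - (u * x - x * u) * u = 0"
  shows "u \<in> center S"
proof -
  define d where "d y = u * y - y * u" for y
  have dS: "d y \<in> S" if "y \<in> S" for y
    unfolding d_def using that u by (simp add: S_closed)
  have leibniz: "d (x * y) = d x * y + x * d y" for x y
    unfolding d_def by (simp add: algebra_simps)
  have dd': "d (d x) = 0" if "x \<in> S" for x
    unfolding d_def using dd[OF that] .
  have dxdy: "d x * d y = 0" if "x \<in> S" "y \<in> S" for x y
  proof (rule double_eq_zero)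
    show "d x * d y \<in> S" using that dS S_mult by blast
    have "d (d (x * y)) = d (d x) * y + (d x * d y + d x * d y) + x * d (d y)"
      unfolding leibniz by (simp add: d_def algebra_simps)
    then show "d x * d y + d x * d y = 0"
      using dd' that S_mult by simp
  qed
  have "d x = 0" if x: "x \<in> S" for x
  proof (rule sandwich_eq_zero)
    show "d x \<in> S" using dS x .
    fix s assume s: "s \<in> S"
    have "d x * d (s * x) = d x * d s * x + d x * s * d x"
      unfolding leibniz by (simp add: algebra_simps)
    then show "d x * s * d x = 0"
      using dxdy x s S_mult by simp
  qed
  then show ?thesis
    unfolding center_def d_def using u by simp
qed

text \<open>With \<open>c = [a,y]\<close> central, \<open>[a,y\<^sup>2] = 2cy\<close> is central as well; this forces \<open>c[y,S] = 0\<close>,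
  and in particular \<open>c\<^sup>2 = -c[y,a] = 0\<close>.\<close>
lemma commute_if_commutator_central:
  assumes a: "a \<in> S" and I: "I \<subseteq> S" "\<And>y. y \<in> I \<Longrightarrow> y * y \<in> I"
    and central: "\<And>y. y \<in> I \<Longrightarrow> a * y - y * a \<in> center S"
    and y: "y \<in> I"
  shows "a * y = y * a"
proof -
  define c where "c = a * y - y * a"
  have yS: "y \<in> S" using I y by blast
  have c: "c \<in> center S" unfolding c_def using central y .
  have "a * (y * y) - (y * y) * a = c * y + y * c"
    unfolding c_def by (simp add: algebra_simps)
  then have c2: "c * y + c * y \<in> center S"
    using central[OF I(2)[OF y]] center_commute[OF c yS] by simp
  have cw: "c * (y * w - w * y) = 0" if w: "w \<in> S" for w
  proof (rule double_eq_zero)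
    show "c * (y * w - w * y) \<in> S"
      using center_subset[OF c] yS w by (simp add: S_closed)
    have "(c * y + c * y) * w = w * (c * y + c * y)"
      using center_commute[OF c2 w] by simp
    moreover have "w * (c * y) = c * (w * y)"
      using center_commute[OF c w] by (simp add: mult.assoc[symmetric])
    ultimately show "c * (y * w - w * y) + c * (y * w - w * y) = 0"
      by (simp add: algebra_simps)
  qed
  have "c * c = - (c * (y * a - a * y))"
    unfolding c_def by (simp add: algebra_simps)
  then have "c = 0"
    using cw[OF a] central_square_eq_zero[OF c] by simp
  then show ?thesis
    unfolding c_def by simp
qed

lemma LZ_lie_semiprime: "lie_semiprime LZ"
  unfolding lie_semiprime_def
proof (intro allI impI)
  fix I assume "lie_ideal LZ I \<and> I \<noteq> {lzero LZ}"
  then have sub: "I \<subseteq> zcoset ` S" and zero: "zcoset 0 \<in> I" and nonzero: "I \<noteq> {zcoset 0}"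
    and bracket: "\<And>X Y. X \<in> zcoset ` S \<Longrightarrow> Y \<in> I \<Longrightarrow> lbr LZ X Y \<in> I"
    unfolding lie_ideal_def LZ_simps(1,2) by blast+
  obtain u where u: "u \<in> S" "zcoset u \<in> I" "zcoset u \<noteq> zcoset 0"
    using sub zero nonzero by blast
  show "\<exists>X\<in>I. \<exists>Y\<in>I. lbr LZ X Y \<noteq> lzero LZ"
  proof (rule ccontr)
    assume "\<not> ?thesis"
    then have abelian: "\<And>X Y. X \<in> I \<Longrightarrow> Y \<in> I \<Longrightarrow> lbr LZ X Y = zcoset 0"
      unfolding LZ_simps by blast
    have "u * (u * x - x * u) - (u * x - x * u) * u \<in> center S" if x: "x \<in> S" for x
    proof -
      have "zcoset (x * u - u * x) \<in> I"
        using bracket[of "zcoset x" "zcoset u"] x u LZ_bracket by simp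
      then have "lbr LZ (zcoset u) (zcoset (x * u - u * x)) = zcoset 0"
        using abelian u by blast
      then have "u * (x * u - u * x) - (x * u - u * x) * u \<in> center S"
        using x u zcoset_eq_zero_iff LZ_bracket S_closed by simp
      from center_uminus[OF this] show ?thesis
        by (simp add: algebra_simps)
    qed
    then have "u \<in> center S"
      using u(1) double_commutator_eq_zero center_if_double_commutator_zero by blast
    then show False
      using u zcoset_eq_zero_iff by simp
  qed
qed

end

section \<open>Algebras between \<open>A\<close> and \<open>Q\<^sub>s(A)\<close>\<close>

locale Qmax_setting = semiprime_subalg smult A
  for smult :: "'r::comm_ring_1 \<Rightarrow> 'a::ring \<Rightarrow> 'a" and A :: "'a set" +
  fixes U :: "'a set"
  assumes two_torsion_free_A: "two_torsion_free A"
    and Qmax: "is_Qmax_left smult A U"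
begin

sublocale semiprime_tf_subalg smult A
  by unfold_locales (rule two_torsion_free_A semiprime_elementwise)+

lemma A_subset_U: "A \<subseteq> U"
  using Qmax unfolding is_Qmax_left_def by blast

lemma U_left_faithful:
  assumes "q \<in> U" "essential_ideal smult A I" "\<And>x. x \<in> I \<Longrightarrow> x * q = 0"
  shows "q = 0"
proof -
  have "\<forall>q\<in>U. \<forall>I. dense_left_ideal smult A I \<and> (\<forall>x\<in>I. x * q = 0) \<longrightarrow> q = 0"
    using Qmax unfolding is_Qmax_left_def by blast
  then show ?thesis
    using assms essential_imp_dense by blast
qed

end

locale intermediate_algebra = Qmax_setting +
  fixes Q
  assumes Q_subalgebra: "subalgebra smult Q"
    and A_subset_Q: "A \<subseteq> Q"
    and Q_subset_Qs: "Q \<subseteq> Qs smult A U"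
begin

lemma Q_subset_U: "Q \<subseteq> U"
  using Q_subset_Qs unfolding Qs_def by blast

lemma Q_essential_idealE:
  assumes "q \<in> Q"
  obtains I where "essential_ideal smult A I"
    "\<And>x. x \<in> I \<Longrightarrow> x * q \<in> A" "\<And>x. x \<in> I \<Longrightarrow> q * x \<in> A"
  using assms Q_subset_Qs unfolding Qs_def by blast

lemma Q_left_faithful:
  "q \<in> Q \<Longrightarrow> essential_ideal smult A I \<Longrightarrow> (\<And>x. x \<in> I \<Longrightarrow> x * q = 0) \<Longrightarrow> q = 0"
  using U_left_faithful Q_subset_U by blast

lemma Q_right_faithful:
  assumes q: "q \<in> Q" and E: "essential_ideal smult A I" and qI: "\<And>x. x \<in> I \<Longrightarrow> q * x = 0"
  shows "q = 0"
proof -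
  obtain J where J: "essential_ideal smult A J" "\<And>y. y \<in> J \<Longrightarrow> y * q \<in> A"
    "\<And>y. y \<in> J \<Longrightarrow> q * y \<in> A"
    by (rule Q_essential_idealE[OF q]) (rule that)
  have "y * q = 0" if "y \<in> J" for y
  proof (rule essential_left_ann_eq_zero[OF E J(2)[OF that]])
    fix x assume "x \<in> I"
    then show "y * q * x = 0" using qI by (simp add: mult.assoc)
  qed
  then show ?thesis
    by (rule Q_left_faithful[OF q J(1)])
qed

lemma two_torsion_free_Q: "two_torsion_free Q"
  unfolding two_torsion_free_def
proof (intro ballI impI)
  fix q assume q: "q \<in> Q" and "q + q = 0"
  obtain I where I: "essential_ideal smult A I" "\<And>x. x \<in> I \<Longrightarrow> x * q \<in> A"
    "\<And>x. x \<in> I \<Longrightarrow> q * x \<in> A"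
    by (rule Q_essential_idealE[OF q]) (rule that)
  have "x * q = 0" if "x \<in> I" for x
    using double_eq_zero[OF I(2)[OF that]] \<open>q + q = 0\<close> by (simp flip: distrib_left)
  then show "q = 0"
    using Q_left_faithful[OF q I(1)] by blast
qed

lemma semiprime_elementwise_Q: "semiprime_elementwise Q"
  unfolding semiprime_elementwise_def
proof (intro ballI impI)
  fix q assume q: "q \<in> Q" and qQq: "\<forall>s\<in>Q. q * s * q = 0"
  obtain I where I: "essential_ideal smult A I" "\<And>x. x \<in> I \<Longrightarrow> x * q \<in> A"
    "\<And>x. x \<in> I \<Longrightarrow> q * x \<in> A"
    by (rule Q_essential_idealE[OF q]) (rule that)
  have IA: "I \<subseteq> A"
    using alg_idealD(1)[OF essential_idealD[OF I(1)]] .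
  have "x * q = 0" if x: "x \<in> I" for x
  proof (rule sandwich_eq_zero)
    show "x * q \<in> A" using I(2) x .
    fix s assume "s \<in> A"
    then have "q * (s * x) * q = 0"
      using qQq x IA A_subset_Q S_mult by blast
    then show "x * q * s * (x * q) = 0"
      by (simp add: mult.assoc)
  qed
  then show "q = 0"
    using Q_left_faithful[OF q I(1)] by blast
qed

sublocale SQ: semiprime_tf_subalg smult Q
  by unfold_locales (rule Q_subalgebra two_torsion_free_Q semiprime_elementwise_Q)+

lemma center_A_subset_center_Q: "center A \<subseteq> center Q"
proof
  fix z assume z: "z \<in> center A"
  have zQ: "z \<in> Q"
    using center_subset[OF z] A_subset_Q by blast
  have "z * q = q * z" if q: "q \<in> Q" for q
  proof -
    obtain I where I: "essential_ideal smult A I" "\<And>x. x \<in> I \<Longrightarrow> x * q \<in> A"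
      "\<And>x. x \<in> I \<Longrightarrow> q * x \<in> A"
      by (rule Q_essential_idealE[OF q]) (rule that)
    have "x * (z * q - q * z) = 0" if x: "x \<in> I" for x
    proof -
      have "x \<in> A"
        using x alg_idealD(1)[OF essential_idealD[OF I(1)]] by blast
      then have "x * (z * q) = z * (x * q)"
        using center_commute[OF z] by (metis mult.assoc)
      moreover have "z * (x * q) = x * (q * z)"
        using center_commute[OF z I(2)[OF x]] by (simp add: mult.assoc)
      ultimately show ?thesis
        by (simp add: algebra_simps)
    qed
    moreover have "z * q - q * z \<in> Q"
      using zQ q SQ.S_diff SQ.S_mult by blast
    ultimately have "z * q - q * z = 0"
      using Q_left_faithful[OF _ I(1)] by blast
    then show ?thesis by simp
  qed
  then show "z \<in> center Q"
    unfolding center_def using zQ by blast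
qed

lemma commute_A_if_commute_essential_ideal:
  assumes q: "q \<in> Q" and E: "essential_ideal smult A I"
    and qI: "\<And>y. y \<in> I \<Longrightarrow> q * y = y * q" and w: "w \<in> A"
  shows "q * w = w * q"
proof -
  note I = alg_idealD[OF essential_idealD[OF E]]
  have vanish: "(q * w - w * q) * y = 0" if y: "y \<in> I" for y
  proof -
    have "(q * w - w * q) * y = q * (w * y) - w * (q * y)"
      by (simp add: algebra_simps)
    also have "\<dots> = 0"
      using qI[OF I(6)[OF w y]] qI[OF y] by (simp add: mult.assoc)
    finally show ?thesis .
  qed
  have "q * w - w * q \<in> Q"
    using q w A_subset_Q SQ.S_diff SQ.S_mult by blast
  from Q_right_faithful[OF this E vanish] show ?thesis
    by simp
qed

lemma center_if_commute_A:
  assumes q: "q \<in> Q" and qA: "\<And>w. w \<in> A \<Longrightarrow> q * w = w * q"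
  shows "q \<in> center Q"
proof -
  have "q * w = w * q" if w: "w \<in> Q" for w
  proof -
    obtain J where J: "essential_ideal smult A J" "\<And>x. x \<in> J \<Longrightarrow> x * w \<in> A"
      "\<And>x. x \<in> J \<Longrightarrow> w * x \<in> A"
      by (rule Q_essential_idealE[OF w]) (rule that)
    have vanish: "x * (q * w - w * q) = 0" if x: "x \<in> J" for x
    proof -
      have "x \<in> A"
        using x alg_idealD(1)[OF essential_idealD[OF J(1)]] by blast
      have "x * q * w = q * (x * w)"
        using qA[OF \<open>x \<in> A\<close>] by (simp add: mult.assoc[symmetric])
      moreover have "x * w * q = q * (x * w)"
        using qA[OF J(2)[OF x]] by simp
      ultimately show ?thesis
        by (simp add: right_diff_distrib mult.assoc[symmetric])
    qed
    have "q * w - w * q \<in> Q"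
      using q w SQ.S_diff SQ.S_mult by blast
    from Q_left_faithful[OF this J(1) vanish] show ?thesis
      by simp
  qed
  then show ?thesis
    unfolding center_def using q by blast
qed

lemma center_Q_if_centralizes_essential_ideal:
  assumes q: "q \<in> Q" and E: "essential_ideal smult A I"
    and central: "\<And>y. y \<in> I \<Longrightarrow> q * y - y * q \<in> center Q"
  shows "q \<in> center Q"
proof -
  note I = alg_idealD[OF essential_idealD[OF E]]
  have "q * y = y * q" if "y \<in> I" for y
    using SQ.commute_if_commutator_central[OF q _ _ central that] I(1,6) A_subset_Q by blast
  then show ?thesis
    using center_if_commute_A[OF q] commute_A_if_commute_essential_ideal[OF q E] by blast
qed

lemma natural_map_zcoset:
  assumes "x \<in> A"
  shows "natural_map smult Q (zcoset x) = SQ.zcoset x"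
proof -
  obtain z where z: "z \<in> center A" "rep (zcoset x) = x + z"
    by (rule rep_zcoset)
  then show ?thesis
    unfolding natural_map_def z(2)
    using SQ.zcoset_add_center assms A_subset_Q center_A_subset_center_Q by blast
qed

lemma inj_on_natural_map: "inj_on (natural_map smult Q) (lcar LZ)"
proof (rule inj_onI)
  fix X Y assume "X \<in> lcar LZ" "Y \<in> lcar LZ"
    and eq: "natural_map smult Q X = natural_map smult Q Y"
  then obtain x y where xy: "x \<in> A" "y \<in> A" "X = zcoset x" "Y = zcoset y"
    unfolding LZ_simps by blast
  moreover have "x \<in> Q" "y \<in> Q"
    using xy A_subset_Q by blast+
  ultimately have "x - y \<in> center Q"
    using eq natural_map_zcoset SQ.zcoset_eq_iff by simp
  then have "x - y \<in> center A"
    using xy S_diff A_subset_Q unfolding center_def by auto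
  then show "X = Y"
    using xy zcoset_eq_iff by simp
qed

end

context Qmax_setting
begin

lemma intermediate_self: "intermediate_algebra smult A U A"
proof unfold_locales
  show "subalgebra smult A" by (rule subalgebra)
  show "A \<subseteq> Qs smult A U"
    unfolding Qs_def using A_subset_U essential_ideal_self S_mult by blast
qed simp

lemma center_A_if_centralizes_essential_ideal:
  "a \<in> A \<Longrightarrow> essential_ideal smult A I \<Longrightarrow> (\<And>y. y \<in> I \<Longrightarrow> a * y - y * a \<in> center A)
    \<Longrightarrow> a \<in> center A"
  by (rule intermediate_algebra.center_Q_if_centralizes_essential_ideal[OF intermediate_self])

lemma lie_ann_zcoset_essential:
  assumes E: "essential_ideal smult A I"
  shows "lie_ann LZ (zcoset ` I) = {lzero LZ}"
proof -
  have IA: "I \<subseteq> A"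
    using alg_idealD(1)[OF essential_idealD[OF E]] .
  have "zcoset a = zcoset 0"
    if a: "a \<in> A" and ann: "\<forall>y\<in>I. lbr LZ (zcoset a) (zcoset y) = zcoset 0" for a
  proof -
    have "a * y - y * a \<in> center A" if "y \<in> I" for y
    proof -
      have "y \<in> A" using that IA by blast
      then have "zcoset (a * y - y * a) = zcoset 0"
        using ann[rule_format, OF that] LZ_bracket[OF a] by simp
      then show ?thesis
        using zcoset_eq_zero_iff a \<open>y \<in> A\<close> S_diff S_mult by simp
    qed
    then have "a \<in> center A"
      using center_A_if_centralizes_essential_ideal[OF a E] by blast
    then show ?thesis
      using zcoset_eq_zero_iff a by simp
  qed
  moreover have "lbr LZ (zcoset 0) (zcoset y) = zcoset 0" if "y \<in> I" for y
    using LZ_bracket[of 0 y] S_zero that IA by auto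
  ultimately show ?thesis
    unfolding lie_ann_def LZ_simps using S_zero by auto
qed

end

context intermediate_algebra
begin

lemma lie_algebra_of_quotients_natural_map:
  "lie_algebra_of_quotients LZ SQ.LZ (natural_map smult Q)"
  unfolding lie_algebra_of_quotients_def
proof (intro ballI impI)
  fix X assume "X \<in> lcar SQ.LZ" "X \<noteq> lzero SQ.LZ"
  then obtain q where q: "q \<in> Q" "X = SQ.zcoset q" "q \<notin> center Q"
    using SQ.zcoset_eq_zero_iff unfolding SQ.LZ_simps by auto
  obtain I where E: "essential_ideal smult A I"
    and Iq: "\<And>x. x \<in> I \<Longrightarrow> x * q \<in> A" and qI: "\<And>x. x \<in> I \<Longrightarrow> q * x \<in> A"
    by (rule Q_essential_idealE[OF q(1)]) (rule that)
  have IA: "I \<subseteq> A"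
    using alg_idealD(1)[OF essential_idealD[OF E]] .
  have bracket: "lbr SQ.LZ (natural_map smult Q (zcoset x)) X = SQ.zcoset (x * q - q * x)"
    if "x \<in> I" for x
  proof -
    have "x \<in> A" "x \<in> Q"
      using that IA A_subset_Q by blast+
    then show ?thesis
      using natural_map_zcoset SQ.LZ_bracket q by simp
  qed
  show "\<exists>J. lie_ideal LZ J \<and> lie_ann LZ J = {lzero LZ} \<and>
      (\<forall>x\<in>J. lbr SQ.LZ (natural_map smult Q x) X \<in> natural_map smult Q ` lcar LZ) \<and>
      (\<exists>x\<in>J. lbr SQ.LZ (natural_map smult Q x) X \<noteq> lzero SQ.LZ)"
  proof (intro exI conjI)
    show "lie_ideal LZ (zcoset ` I)"
      using lie_ideal_zcoset_image essential_idealD E by blast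
    show "lie_ann LZ (zcoset ` I) = {lzero LZ}"
      using lie_ann_zcoset_essential[OF E] .
    have "SQ.zcoset (x * q - q * x) \<in> natural_map smult Q ` lcar LZ" if "x \<in> I" for x
      using natural_map_zcoset[of "x * q - q * x"] Iq qI S_diff that unfolding LZ_simps by auto
    then show "\<forall>x\<in>zcoset ` I. lbr SQ.LZ (natural_map smult Q x) X \<in> natural_map smult Q ` lcar LZ"
      using bracket by auto
    show "\<exists>x\<in>zcoset ` I. lbr SQ.LZ (natural_map smult Q x) X \<noteq> lzero SQ.LZ"
    proof (rule ccontr)
      assume "\<not> ?thesis"
      then have abelian: "lbr SQ.LZ (natural_map smult Q (zcoset x)) X = SQ.zcoset 0"
        if "x \<in> I" for x
        using that unfolding SQ.LZ_simps(2) by blast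
      have "q * x - x * q \<in> center Q" if "x \<in> I" for x
      proof -
        have "x \<in> Q"
          using that IA A_subset_Q by blast
        then have "x * q - q * x \<in> center Q"
          using abelian[OF that] bracket[OF that] SQ.zcoset_eq_zero_iff q(1) SQ.S_diff SQ.S_mult
          by simp
        from SQ.center_uminus[OF this] show ?thesis
          by simp
      qed
      then show False
        using center_Q_if_centralizes_essential_ideal[OF q(1) E] q(3) by blast
    qed
  qed
qed

end

theorem mainTheorem3:
  fixes smult :: "'r::comm_ring_1 \<Rightarrow> 'a::ring \<Rightarrow> 'a"
    and A U Q :: "'a set"
  assumes "is_algebra smult"
    and "subalgebra smult A"
    and "semiprime_alg smult A"
    and "two_torsion_free A"
    and "is_Qmax_left smult A U"
    and "subalgebra smult Q"
    and "A \<subseteq> Q"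
    and "Q \<subseteq> Qs smult A U"
  shows "lie_algebra (minus_mod_center smult A) \<and> lie_semiprime (minus_mod_center smult A)
       \<and> lie_algebra (minus_mod_center smult Q) \<and> lie_semiprime (minus_mod_center smult Q)
       \<and> inj_on (natural_map smult Q) (lcar (minus_mod_center smult A))
       \<and> lie_algebra_of_quotients (minus_mod_center smult A) (minus_mod_center smult Q)
            (natural_map smult Q)"
proof -
  interpret algebra_over smult
    using assms(1) by (rule is_algebra_imp_algebra_over)
  interpret intermediate_algebra smult A U Q
    by unfold_locales (rule assms)+
  show ?thesis
    using LZ_lie_algebra LZ_lie_semiprime SQ.LZ_lie_algebra SQ.LZ_lie_semiprime
      inj_on_natural_map lie_algebra_of_quotients_natural_map by blast
qed

end
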